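(* Consider an instance of additive multislope ski rental with states $0,\dots,k$, buying costs $b_0<b_1<\dots<b_k$ and rental rates $r_0>r_1>\dots>r_k\ge 0$, such that $s_1<s_2<\dots<s_k$ where $s_i=\frac{b_i-b_{i-1}}{r_{i-1}-r_i}$. Let $c\ge 1$. If there exists a $c$-competitive profile $p$ all of whose component functions $p_0,\dots,p_k$ are continuous, then there exists a prudent $c$-competitive profile $\tilde p$.
   Context: A profile is a vector $p(t)=(p_0(t),\dots,p_k(t))$ of nonnegative functions of $t\ge0$ with $\sum_{i=0}^kp_i(t)=1$ for all $t$ ($p_i(t)$ is the probability of being in state $i$ at time $t$). Its expected buying cost is $B_p(t)=\sum_ip_i(t)b_i$, its expected rental rate is $R_p(t)=\sum_ip_i(t)r_i$, and its expected total cost is $X_p(t)=B_p(t)+\int_0^tR_p(z)\,dz$. With $\textsc{opt}(t)=\min_i(b_i+r_it)$, a profile is $c$-competitive if $X_p(t)\le c\cdot\textsc{opt}(t)$ for all $t\ge0$. Slope $i$ is active at time $t$ if $p_i(t)>0$; a profile is prudent if at every time $t$ the set of active slopes consists of either one slope or two consecutive slopes $i,i+1$. *)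

theory Defs
  imports "HOL-Analysis.Analysis"
begin

text \<open>States are 0..k; b i buying cost, r i rental rate; a profile is p :: nat => real => real,
  p i t the probability of being in state i at time t (only t >= 0 and i <= k matter).\<close>

definition opt :: "nat \<Rightarrow> (nat \<Rightarrow> real) \<Rightarrow> (nat \<Rightarrow> real) \<Rightarrow> real \<Rightarrow> real" where
  "opt k b r t = Min ((\<lambda>i. b i + r i * t) ` {0..k})"

definition is_profile :: "nat \<Rightarrow> (nat \<Rightarrow> real \<Rightarrow> real) \<Rightarrow> bool" where
  "is_profile k p \<longleftrightarrow> (\<forall>t\<ge>0. (\<forall>i\<le>k. p i t \<ge> 0) \<and> (\<Sum>i\<le>k. p i t) = 1)"

definition buy_cost :: "nat \<Rightarrow> (nat \<Rightarrow> real) \<Rightarrow> (nat \<Rightarrow> real \<Rightarrow> real) \<Rightarrow> real \<Rightarrow> real" where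
  "buy_cost k b p t = (\<Sum>i\<le>k. p i t * b i)"

definition rent_rate :: "nat \<Rightarrow> (nat \<Rightarrow> real) \<Rightarrow> (nat \<Rightarrow> real \<Rightarrow> real) \<Rightarrow> real \<Rightarrow> real" where
  "rent_rate k r p t = (\<Sum>i\<le>k. p i t * r i)"

definition total_cost :: "nat \<Rightarrow> (nat \<Rightarrow> real) \<Rightarrow> (nat \<Rightarrow> real) \<Rightarrow> (nat \<Rightarrow> real \<Rightarrow> real) \<Rightarrow> real \<Rightarrow> real" where
  "total_cost k b r p t = buy_cost k b p t + integral {0..t} (rent_rate k r p)"

definition competitive :: "nat \<Rightarrow> (nat \<Rightarrow> real) \<Rightarrow> (nat \<Rightarrow> real) \<Rightarrow> real \<Rightarrow> (nat \<Rightarrow> real \<Rightarrow> real) \<Rightarrow> bool" where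
  "competitive k b r c p \<longleftrightarrow> is_profile k p \<and>
     (\<forall>t\<ge>0. rent_rate k r p integrable_on {0..t} \<and> total_cost k b r p t \<le> c * opt k b r t)"

definition active :: "nat \<Rightarrow> (nat \<Rightarrow> real \<Rightarrow> real) \<Rightarrow> real \<Rightarrow> nat set" where
  "active k p t = {i. i \<le> k \<and> p i t > 0}"

definition prudent :: "nat \<Rightarrow> (nat \<Rightarrow> real \<Rightarrow> real) \<Rightarrow> bool" where
  "prudent k p \<longleftrightarrow> (\<forall>t\<ge>0. (\<exists>i\<le>k. active k p t = {i}) \<or> (\<exists>i<k. active k p t = {i, Suc i}))"

definition slope_ratio :: "(nat \<Rightarrow> real) \<Rightarrow> (nat \<Rightarrow> real) \<Rightarrow> nat \<Rightarrow> real" where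
  "slope_ratio b r i = (b i - b (i - 1)) / (r (i - 1) - r i)"

end

theory Submission
  imports Defs
begin

text \<open>The slope condition says that the points \<open>(b i, r i)\<close> are the vertices of a convex
  polyline, i.e. of the maximum of the lines through consecutive vertices. By convexity, the
  expected rental rate \<open>\<Sum> p i * r i\<close> of any profile is at least the value of this polyline at the
  expected buying cost \<open>x = \<Sum> p i * b i\<close>, and that value is attained by the two-point profile
  on the segment containing \<open>x\<close>, which also has buying cost \<open>x\<close>. Replacing \<open>p\<close> pointwise by
  this two-point profile therefore keeps the buying cost and lowers the rental rate, so it is
  still \<open>c\<close>-competitive; continuity of \<open>p\<close> makes its rental rate continuous, hence integrable.\<close>

lemma continuous_on_MAX:
  fixes f :: "'i \<Rightarrow> 'a::topological_space \<Rightarrow> 'b::linorder_topology"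
  assumes "finite I" "I \<noteq> {}" "\<And>i. i \<in> I \<Longrightarrow> continuous_on S (f i)"
  shows "continuous_on S (\<lambda>x. MAX i\<in>I. f i x)"
  using assms
proof (induction I rule: finite_ne_induct)
  case (insert j I)
  then show ?case by (simp add: continuous_on_max)
qed simp

lemma singleton_or_consecutive_pair:
  assumes "A \<subseteq> {i, Suc i}" "A \<noteq> {}" "i < k"
  shows "(\<exists>j\<le>k. A = {j}) \<or> (\<exists>j<k. A = {j, Suc j})"
proof -
  have "A = {i} \<or> A = {Suc i} \<or> A = {i, Suc i}"
    using assms(1,2) by blast
  then show ?thesis
    using assms(3) by (auto intro: Suc_leI)
qed

lemma prudent_single_state:
  assumes "is_profile 0 p"
  shows "prudent 0 p"
  unfolding prudent_def
proof (intro allI impI disjI1 exI conjI)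
  fix t :: real assume "t \<ge> 0"
  then have "p 0 t = 1"
    using assms by (simp add: is_profile_def)
  then show "active 0 p t = {0}"
    by (auto simp: active_def)
qed simp

locale convex_multislope =
  fixes k :: nat and b r :: "nat \<Rightarrow> real"
  assumes b_mono: "\<And>i. i < k \<Longrightarrow> b i < b (Suc i)"
    and r_mono: "\<And>i. i < k \<Longrightarrow> r i > r (Suc i)"
    and slope_ratio_mono:
      "\<And>i. 1 \<le> i \<Longrightarrow> i < k \<Longrightarrow> slope_ratio b r i < slope_ratio b r (Suc i)"
begin

definition chord_slope :: "nat \<Rightarrow> real" where
  "chord_slope i = (r (Suc i) - r i) / (b (Suc i) - b i)"

definition chord :: "nat \<Rightarrow> real \<Rightarrow> real" where
  "chord i x = r i + (x - b i) * chord_slope i"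

definition polyline :: "real \<Rightarrow> real" where
  "polyline x = (MAX i\<in>{..<k}. chord i x)"

lemma b_mono_le: "j \<le> i \<Longrightarrow> i \<le> k \<Longrightarrow> b j \<le> b i"
  by (rule lift_Suc_mono_le_ivl[where N = "{..<k}"]) (auto simp: b_mono less_imp_le)

lemma r_Suc_eq: "i < k \<Longrightarrow> r (Suc i) = r i + (b (Suc i) - b i) * chord_slope i"
  using b_mono[of i] by (simp add: chord_slope_def)

text \<open>\<open>slope_ratio b r (Suc i) = - 1 / chord_slope i\<close>, and \<open>x \<mapsto> - 1 / x\<close> is increasing
  on the negative reals.\<close>
lemma chord_slope_less:
  assumes "Suc i < k"
  shows "chord_slope i < chord_slope (Suc i)"
proof -
  define db db' dr dr' where "db = b (Suc i) - b i" and "db' = b (Suc (Suc i)) - b (Suc i)"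
    and "dr = r i - r (Suc i)" and "dr' = r (Suc i) - r (Suc (Suc i))"
  have pos: "db > 0" "db' > 0" "dr > 0" "dr' > 0"
    using assms b_mono[of i] b_mono[of "Suc i"] r_mono[of i] r_mono[of "Suc i"]
    by (auto simp: db_def db'_def dr_def dr'_def)
  have "db / dr < db' / dr'"
    using slope_ratio_mono[of "Suc i"] assms
    by (simp add: slope_ratio_def db_def db'_def dr_def dr'_def)
  then have "db * dr' < db' * dr"
    using pos by (simp add: divide_simps)
  then have "- dr / db < - dr' / db'"
    using pos by (simp add: divide_simps mult.commute)
  then show ?thesis
    by (simp add: chord_slope_def db_def db'_def dr_def dr'_def divide_simps)
qed

lemma chord_slope_mono: "j \<le> i \<Longrightarrow> i < k \<Longrightarrow> chord_slope j \<le> chord_slope i"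
  by (rule lift_Suc_mono_le_ivl[where N = "{n. Suc n < k}"])
    (auto simp: chord_slope_less less_imp_le)

text \<open>The gap \<open>r j - chord i (b j)\<close> vanishes at \<open>j = i\<close> and its increments have the sign of
  \<open>chord_slope j - chord_slope i\<close>.\<close>
lemma vertex_above_chord:
  assumes "i < k" "j \<le> k"
  shows "chord i (b j) \<le> r j"
proof -
  define gap where "gap j = r j - chord i (b j)" for j
  have gap_step: "gap (Suc n) - gap n = (b (Suc n) - b n) * (chord_slope n - chord_slope i)"
    if "n < k" for n
    using r_Suc_eq[OF that] by (simp add: gap_def chord_def algebra_simps)
  have "gap i = 0"
    by (simp add: gap_def chord_def)
  moreover have "gap i \<le> gap j" if "i \<le> j"
  proof (rule lift_Suc_mono_le_ivl[where N = "{i..<k}"])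
    fix n assume "n \<in> {i..<k}"
    then have "0 \<le> (b (Suc n) - b n) * (chord_slope n - chord_slope i)"
      using b_mono[of n] chord_slope_mono[of i n] by simp
    then show "gap n \<le> gap (Suc n)"
      using gap_step[of n] \<open>n \<in> {i..<k}\<close> by simp
  qed (use that assms in auto)
  moreover have "- gap j \<le> - gap i" if "j \<le> i"
  proof (rule lift_Suc_mono_le_ivl[where N = "{..<i}"])
    fix n assume "n \<in> {..<i}"
    then have "(b (Suc n) - b n) * (chord_slope n - chord_slope i) \<le> 0"
      using b_mono[of n] chord_slope_mono[of n i] assms by (simp add: mult_nonneg_nonpos)
    then show "- gap n \<le> - gap (Suc n)"
      using gap_step[of n] \<open>n \<in> {..<i}\<close> assms by simp
  qed (use that in auto)
  ultimately show ?thesis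
    unfolding gap_def by linarith
qed

lemma chord_le_mean_rent:
  assumes "i < k" "\<And>j. j \<le> k \<Longrightarrow> w j \<ge> 0" "(\<Sum>j\<le>k. w j) = 1"
  shows "chord i (\<Sum>j\<le>k. w j * b j) \<le> (\<Sum>j\<le>k. w j * r j)"
proof -
  have affine: "chord i y = (r i - b i * chord_slope i) + chord_slope i * y" for y
    by (simp add: chord_def algebra_simps)
  have "chord i (\<Sum>j\<le>k. w j * b j) = (\<Sum>j\<le>k. w j * chord i (b j))"
    unfolding affine using assms(3)
    by (simp add: distrib_left sum.distrib sum_distrib_left mult_ac flip: sum_distrib_right)
  also have "\<dots> \<le> (\<Sum>j\<le>k. w j * r j)"
    using assms by (intro sum_mono mult_left_mono vertex_above_chord) auto
  finally show ?thesis .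
qed

definition segment :: "real \<Rightarrow> nat" where
  "segment x = (LEAST i. x \<le> b (Suc i))"

lemma segment_bounds:
  assumes "0 < k" "b 0 \<le> x" "x \<le> b k"
  shows "segment x < k" "b (segment x) \<le> x" "x \<le> b (Suc (segment x))"
proof -
  have ex: "x \<le> b (Suc (k - 1))"
    using assms by simp
  show "x \<le> b (Suc (segment x))"
    unfolding segment_def by (rule LeastI[of "\<lambda>i. x \<le> b (Suc i)", OF ex])
  have "segment x \<le> k - 1"
    unfolding segment_def by (rule Least_le[of "\<lambda>i. x \<le> b (Suc i)", OF ex])
  then show "segment x < k"
    using assms(1) by simp
  show "b (segment x) \<le> x"
  proof (cases "segment x")
    case (Suc m)
    then have "\<not> x \<le> b (Suc m)"
      unfolding segment_def by (metis lessI not_less_Least)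
    then show ?thesis
      using Suc by simp
  qed (use assms in simp)
qed

definition two_point :: "nat \<Rightarrow> real \<Rightarrow> nat \<Rightarrow> real" where
  "two_point i x j =
    (if j = i then (b (Suc i) - x) / (b (Suc i) - b i)
     else if j = Suc i then (x - b i) / (b (Suc i) - b i) else 0)"

lemma sum_two_point:
  assumes "i < k"
  shows "(\<Sum>j\<le>k. two_point i x j * f j) =
    ((b (Suc i) - x) * f i + (x - b i) * f (Suc i)) / (b (Suc i) - b i)"
proof -
  have "(\<Sum>j\<le>k. two_point i x j * f j) = (\<Sum>j\<in>{i, Suc i}. two_point i x j * f j)"
    using assms by (intro sum.mono_neutral_right) (auto simp: two_point_def)
  then show ?thesis
    by (simp add: two_point_def add_divide_distrib)
qed

context
  fixes i :: nat and x :: real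
  assumes i: "i < k" and x: "b i \<le> x" "x \<le> b (Suc i)"
begin

lemma two_point_nonneg: "two_point i x j \<ge> 0"
  using x by (simp add: two_point_def)

lemma two_point_length_pos: "b (Suc i) - b i > 0"
  using b_mono[OF i] by simp

lemma sum_two_point_eq_1: "(\<Sum>j\<le>k. two_point i x j) = 1"
proof -
  have "(b (Suc i) - x) * 1 + (x - b i) * 1 = b (Suc i) - b i"
    by simp
  then show ?thesis
    using sum_two_point[OF i, of x "\<lambda>_. 1"] two_point_length_pos by simp
qed

lemma two_point_buy_cost: "(\<Sum>j\<le>k. two_point i x j * b j) = x"
proof -
  have "(b (Suc i) - x) * b i + (x - b i) * b (Suc i) = x * (b (Suc i) - b i)"
    by (simp add: algebra_simps)
  then show ?thesis
    using sum_two_point[OF i, of x b] two_point_length_pos by simp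
qed

lemma two_point_rent_rate: "(\<Sum>j\<le>k. two_point i x j * r j) = chord i x"
proof -
  have "(\<Sum>j\<le>k. two_point i x j * r j)
      = (r i * (b (Suc i) - b i) + (x - b i) * (r (Suc i) - r i)) / (b (Suc i) - b i)"
    unfolding sum_two_point[OF i] by (simp add: algebra_simps)
  also have "\<dots> = r i + (x - b i) * ((r (Suc i) - r i) / (b (Suc i) - b i))"
    using two_point_length_pos by (simp add: add_divide_distrib)
  finally show ?thesis
    unfolding chord_def chord_slope_def .
qed

lemma polyline_eq_chord: "polyline x = chord i x"
  unfolding polyline_def
proof (rule Max_eqI)
  fix y assume "y \<in> (\<lambda>i. chord i x) ` {..<k}"
  then obtain i' where i': "i' < k" "y = chord i' x"
    by auto
  have "chord i' (\<Sum>j\<le>k. two_point i x j * b j) \<le> (\<Sum>j\<le>k. two_point i x j * r j)"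
    using i'(1) two_point_nonneg sum_two_point_eq_1 by (rule chord_le_mean_rent)
  then show "y \<le> chord i x"
    unfolding i'(2) two_point_buy_cost two_point_rent_rate .
qed (use i in auto)

lemma active_two_point: "{j. j \<le> k \<and> two_point i x j > 0} \<subseteq> {i, Suc i}"
  by (auto simp: two_point_def split: if_splits)

end

lemma continuous_polyline: "0 < k \<Longrightarrow> continuous_on UNIV polyline"
  unfolding polyline_def chord_def [abs_def]
  by (intro continuous_on_MAX continuous_intros) auto

definition two_point_profile :: "(nat \<Rightarrow> real \<Rightarrow> real) \<Rightarrow> nat \<Rightarrow> real \<Rightarrow> real" where
  "two_point_profile p j t = two_point (segment (buy_cost k b p t)) (buy_cost k b p t) j"

context
  fixes p :: "nat \<Rightarrow> real \<Rightarrow> real" and t :: real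
  assumes k: "0 < k" and p: "is_profile k p" and t: "t \<ge> 0"
begin

lemma buy_cost_bounds: "b 0 \<le> buy_cost k b p t" "buy_cost k b p t \<le> b k"
proof -
  have nonneg: "\<And>j. j \<le> k \<Longrightarrow> p j t \<ge> 0" and sum1: "(\<Sum>j\<le>k. p j t) = 1"
    using p t by (auto simp: is_profile_def)
  have "(\<Sum>j\<le>k. p j t * b 0) \<le> buy_cost k b p t" "buy_cost k b p t \<le> (\<Sum>j\<le>k. p j t * b k)"
    unfolding buy_cost_def using nonneg by (auto intro!: sum_mono mult_left_mono b_mono_le)
  then show "b 0 \<le> buy_cost k b p t" "buy_cost k b p t \<le> b k"
    using sum1 by (simp_all flip: sum_distrib_right)
qed

lemmas segment_buy_cost = segment_bounds[OF k buy_cost_bounds]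

lemma two_point_profile_nonneg: "two_point_profile p j t \<ge> 0"
  unfolding two_point_profile_def using segment_buy_cost by (rule two_point_nonneg)

lemma sum_two_point_profile: "(\<Sum>j\<le>k. two_point_profile p j t) = 1"
  unfolding two_point_profile_def using segment_buy_cost by (rule sum_two_point_eq_1)

lemma buy_cost_two_point_profile: "buy_cost k b (two_point_profile p) t = buy_cost k b p t"
  unfolding buy_cost_def[of k b "two_point_profile p"] two_point_profile_def
  using segment_buy_cost by (rule two_point_buy_cost)

lemma rent_rate_two_point_profile: "rent_rate k r (two_point_profile p) t = polyline (buy_cost k b p t)"
  unfolding rent_rate_def[of k r "two_point_profile p"] two_point_profile_def
    two_point_rent_rate[OF segment_buy_cost] polyline_eq_chord[OF segment_buy_cost] ..

lemma rent_rate_two_point_profile_le: "rent_rate k r (two_point_profile p) t \<le> rent_rate k r p t"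
proof -
  have "rent_rate k r (two_point_profile p) t = chord (segment (buy_cost k b p t)) (buy_cost k b p t)"
    using rent_rate_two_point_profile polyline_eq_chord[OF segment_buy_cost] by simp
  also have "\<dots> \<le> rent_rate k r p t"
    using chord_le_mean_rent[of _ "\<lambda>j. p j t"] segment_buy_cost(1) p t
    by (simp add: is_profile_def buy_cost_def rent_rate_def)
  finally show ?thesis .
qed

lemma active_two_point_profile:
  "(\<exists>j\<le>k. active k (two_point_profile p) t = {j}) \<or>
   (\<exists>j<k. active k (two_point_profile p) t = {j, Suc j})"
proof (rule singleton_or_consecutive_pair)
  show "active k (two_point_profile p) t \<subseteq> {segment (buy_cost k b p t), Suc (segment (buy_cost k b p t))}"
    unfolding active_def two_point_profile_def using segment_buy_cost by (rule active_two_point)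
  show "active k (two_point_profile p) t \<noteq> {}"
  proof
    assume "active k (two_point_profile p) t = {}"
    then have "\<not> two_point_profile p j t > 0" if "j \<le> k" for j
      using that by (auto simp: active_def)
    then have "\<forall>j\<in>{..k}. two_point_profile p j t = 0"
      using two_point_profile_nonneg by (simp add: order_less_le)
    then show False
      using sum_two_point_profile by simp
  qed
qed (use segment_buy_cost in blast)

end

lemma prudent_two_point_profile: "0 < k \<Longrightarrow> is_profile k p \<Longrightarrow> prudent k (two_point_profile p)"
  unfolding prudent_def by (intro allI impI active_two_point_profile)

lemma competitive_two_point_profile:
  assumes k: "0 < k" and comp: "competitive k b r c p"
    and cont: "\<And>i. i \<le> k \<Longrightarrow> continuous_on {0..} (p i)"
  shows "competitive k b r c (two_point_profile p)"
  unfolding competitive_def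
proof (intro conjI allI impI)
  have p: "is_profile k p"
    using comp by (simp add: competitive_def)
  show "is_profile k (two_point_profile p)"
    unfolding is_profile_def
    using two_point_profile_nonneg[OF k p] sum_two_point_profile[OF k p] by blast
  fix t :: real assume t: "t \<ge> 0"
  have int_p: "rent_rate k r p integrable_on {0..t}"
    and cost_p: "total_cost k b r p t \<le> c * opt k b r t"
    using comp t by (simp_all add: competitive_def)
  have "continuous_on {0..} (buy_cost k b p)"
    unfolding buy_cost_def by (intro continuous_on_sum continuous_on_mult_right cont) auto
  then have "continuous_on {0..t} (\<lambda>s. polyline (buy_cost k b p s))"
    by (rule continuous_on_compose2[OF continuous_polyline[OF k] continuous_on_subset]) auto
  then have int_polyline: "(\<lambda>s. polyline (buy_cost k b p s)) integrable_on {0..t}"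
    by (rule integrable_continuous_real)
  have "rent_rate k r (two_point_profile p) s = polyline (buy_cost k b p s)"
    if "s \<in> {0..t}" for s
    using that by (intro rent_rate_two_point_profile[OF k p]) simp
  then show int_q: "rent_rate k r (two_point_profile p) integrable_on {0..t}"
    using int_polyline by (rule integrable_cong[THEN iffD2])
  have "rent_rate k r (two_point_profile p) s \<le> rent_rate k r p s" if "s \<in> {0..t}" for s
    using that by (intro rent_rate_two_point_profile_le[OF k p]) simp
  then have "integral {0..t} (rent_rate k r (two_point_profile p)) \<le> integral {0..t} (rent_rate k r p)"
    by (rule integral_le[OF int_q int_p])
  then have "total_cost k b r (two_point_profile p) t \<le> total_cost k b r p t"
    using buy_cost_two_point_profile[OF k p t] by (simp add: total_cost_def)
  then show "total_cost k b r (two_point_profile p) t \<le> c * opt k b r t"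
    using cost_p by linarith
qed

end

theorem theorem4p1:
  fixes k :: nat and b r :: "nat \<Rightarrow> real" and c :: real and p :: "nat \<Rightarrow> real \<Rightarrow> real"
  assumes b_mono: "\<And>i. i < k \<Longrightarrow> b i < b (Suc i)"
    and r_mono: "\<And>i. i < k \<Longrightarrow> r i > r (Suc i)"
    and r_nonneg: "r k \<ge> 0"
    and s_mono: "\<And>i. 1 \<le> i \<Longrightarrow> i < k \<Longrightarrow> slope_ratio b r i < slope_ratio b r (Suc i)"
    and c_ge: "c \<ge> 1"
    and p_comp: "competitive k b r c p"
    and p_cont: "\<And>i. i \<le> k \<Longrightarrow> continuous_on {0..} (p i)"
  shows "\<exists>q. prudent k q \<and> competitive k b r c q"
proof (cases "k = 0")
  case True
  then show ?thesis
    using p_comp prudent_single_state by (auto simp: competitive_def)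
next
  case False
  interpret convex_multislope k b r
    using b_mono r_mono s_mono by unfold_locales
  have k: "0 < k"
    using False by simp
  have "is_profile k p"
    using p_comp by (simp add: competitive_def)
  then show ?thesis
    using prudent_two_point_profile[OF k] competitive_two_point_profile[OF k p_comp p_cont] by blast
qed

end
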